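(* Let $(G,\mathcal{A})$ be a local convergence pairing on $X$ and $A,B\in\mathcal{A}$ with $A\cap B\neq\emptyset$. If $(f_i)\subset G$ acts as a convergence sequence on both $A$ and $B$, and $n$ is the repeller and $p$ the attractor of $(f_i)$ in its action on $A$, then $p$ is the attractor and $n$ the repeller of $(f_i)$ in its action on $B$.
   Context: $X$ is a Peano continuum (compact, connected, locally connected metric space) without cut points and $G$ acts on $X$ by homeomorphisms; $\mathcal{A}$ is a $G$-invariant collection of closed subsets of $X$; $\mathrm{Stab}(A)=\{g\in G:g(A)=A\}$. For a closed $S\subset X$ and connected $B,C\subset X\setminus S$, $S$ separates $B$ from $C$ if they lie in different components of $X\setminus S$; $S$ separates $Y$ if it separates two points of $Y$. Closed sets $A,B$ cross if $A\cap B\neq\emptyset$ or ($A$ separates $B$ and $B$ separates $A$). A crossing sequence is $A_1,\dots,A_n$ with $A_i$ crossing $A_{i+1}$ for $1\le i<n$. $g_i(S)\to p$ means every neighborhood of $p$ contains $g_i(S)$ for all large $i$. A sequence of homeomorphisms $(g_i)$ of $Y$ is a convergence sequence on $Y$ with repeller $n$ and attractor $p$ if $g_i(C)\to p$ for every compact $C\subset Y\setminus\{n\}$; a sequence in $G$ acting as a convergence sequence on $A\in\mathcal{A}$ means its elements preserve $A$ and their restrictions form a convergence sequence on $A$. A group acts as a convergence group on $Y$ if every sequence of distinct elements has a subsequence that is a convergence sequence on $Y$. $(G,\mathcal{A})$ is a local convergence pairing on $X$ if: (1) $|A|>2$ for all $A\in\mathcal{A}$; (2) for each $\epsilon>0$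 only finitely many $A\in\mathcal{A}$ have diameter $>\epsilon$; (3) for any $x,y\in X$ some finite $\mathcal{B}\subset\mathcal{A}$ has $\bigcup\mathcal{B}$ separating $x$ from $y$; (4) each $\mathrm{Stab}(A)$ acts as a convergence group on $A$; (5) for any $A,B\in\mathcal{A}$ with $|A\cap B|\le 2$: if $A\cap B=\{c\}$ then for any $b\in B\setminus\{c\}$ there is a finite crossing sequence $A,A_1,\dots,A_n,B$ in $\mathcal{A}$ with $\{b,c\}\cap A_i=\emptyset$ for $1\le i\le n$; if $|A\cap B|\ne1$ there is a crossing sequence $A,A_1,\dots,A_n,B$ in $\mathcal{A}$ with $(A\cap B)\cap A_i=\emptyset$ for $1\le i\le n$. *)

theory Defs
  imports "HOL-Analysis.Analysis" "HOL-Algebra.Group"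
begin

definition peano_continuum :: "'a::metric_space set \<Rightarrow> bool" where
  "peano_continuum X \<longleftrightarrow> X \<noteq> {} \<and> compact X \<and> connected X \<and> locally connected X"

definition cut_point :: "'a::topological_space set \<Rightarrow> 'a \<Rightarrow> bool" where
  "cut_point X x \<longleftrightarrow> x \<in> X \<and> \<not> connected (X - {x})"

definition acts_by_homeos :: "('g, 'm) monoid_scheme \<Rightarrow> ('g \<Rightarrow> 'a::topological_space \<Rightarrow> 'a) \<Rightarrow> 'a set \<Rightarrow> bool" where
  "acts_by_homeos G act X \<longleftrightarrow> group G \<and>
     (\<forall>g\<in>carrier G. homeomorphism X X (act g) (act (inv\<^bsub>G\<^esub> g))) \<and>
     (\<forall>x\<in>X. act \<one>\<^bsub>G\<^esub> x = x) \<and>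
     (\<forall>g\<in>carrier G. \<forall>h\<in>carrier G. \<forall>x\<in>X. act (g \<otimes>\<^bsub>G\<^esub> h) x = act g (act h x))"

definition separates_from :: "'a::topological_space set \<Rightarrow> 'a set \<Rightarrow> 'a set \<Rightarrow> 'a set \<Rightarrow> bool" where
  "separates_from X S B C \<longleftrightarrow> B \<noteq> {} \<and> C \<noteq> {} \<and> B \<subseteq> X - S \<and> C \<subseteq> X - S \<and>
     (\<forall>b\<in>B. \<forall>c\<in>C. \<not> connected_component (X - S) b c)"

definition separates :: "'a::topological_space set \<Rightarrow> 'a set \<Rightarrow> 'a set \<Rightarrow> bool" where
  "separates X S Y \<longleftrightarrow> (\<exists>x\<in>Y. \<exists>y\<in>Y. separates_from X S {x} {y})"

definition cross :: "'a::topological_space set \<Rightarrow> 'a set \<Rightarrow> 'a set \<Rightarrow> bool" where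
  "cross X A B \<longleftrightarrow> A \<inter> B \<noteq> {} \<or> (separates X A B \<and> separates X B A)"

definition crossing_sequence :: "'a::topological_space set \<Rightarrow> 'a set list \<Rightarrow> bool" where
  "crossing_sequence X L \<longleftrightarrow> (\<forall>i. Suc i < length L \<longrightarrow> cross X (L ! i) (L ! Suc i))"

definition Stab :: "('g, 'm) monoid_scheme \<Rightarrow> ('g \<Rightarrow> 'a \<Rightarrow> 'a) \<Rightarrow> 'a set \<Rightarrow> 'g set" where
  "Stab G act A = {g \<in> carrier G. act g ` A = A}"

definition sets_converge_to :: "(nat \<Rightarrow> 'a::topological_space set) \<Rightarrow> 'a \<Rightarrow> bool" where
  "sets_converge_to S p \<longleftrightarrow> (\<forall>U. open U \<and> p \<in> U \<longrightarrow> (\<exists>N. \<forall>i\<ge>N. S i \<subseteq> U))"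

definition convergence_sequence_on ::
  "'a::topological_space set \<Rightarrow> (nat \<Rightarrow> 'a \<Rightarrow> 'a) \<Rightarrow> 'a \<Rightarrow> 'a \<Rightarrow> bool" where
  "convergence_sequence_on Y g n p \<longleftrightarrow> n \<in> Y \<and> p \<in> Y \<and>
     (\<forall>C. compact C \<and> C \<subseteq> Y - {n} \<longrightarrow> sets_converge_to (\<lambda>i. g i ` C) p)"

definition acts_as_convergence_sequence ::
  "('g, 'm) monoid_scheme \<Rightarrow> ('g \<Rightarrow> 'a::topological_space \<Rightarrow> 'a) \<Rightarrow> 'a set \<Rightarrow> (nat \<Rightarrow> 'g) \<Rightarrow> 'a \<Rightarrow> 'a \<Rightarrow> bool" where
  "acts_as_convergence_sequence G act A f n p \<longleftrightarrow>
     (\<forall>i. f i \<in> Stab G act A) \<and> convergence_sequence_on A (\<lambda>i. act (f i)) n p"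

definition acts_as_convergence_group ::
  "'g set \<Rightarrow> ('g \<Rightarrow> 'a::topological_space \<Rightarrow> 'a) \<Rightarrow> 'a set \<Rightarrow> bool" where
  "acts_as_convergence_group H act Y \<longleftrightarrow>
     (\<forall>f::nat \<Rightarrow> 'g. (\<forall>i. f i \<in> H) \<and> inj f \<longrightarrow>
        (\<exists>r::nat \<Rightarrow> nat. strict_mono r \<and>
           (\<exists>n p. convergence_sequence_on Y (\<lambda>i. act (f (r i))) n p)))"

definition local_convergence_pairing ::
  "'a::metric_space set \<Rightarrow> ('g, 'm) monoid_scheme \<Rightarrow> ('g \<Rightarrow> 'a \<Rightarrow> 'a) \<Rightarrow> 'a set set \<Rightarrow> bool" where
  "local_convergence_pairing X G act \<A> \<longleftrightarrow>
     peano_continuum X \<and> (\<forall>x. \<not> cut_point X x) \<and> acts_by_homeos G act X \<and>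
     (\<forall>A\<in>\<A>. closed A \<and> A \<subseteq> X) \<and>
     (\<forall>g\<in>carrier G. \<forall>A\<in>\<A>. act g ` A \<in> \<A>) \<and>
     \<comment> \<open>(1)\<close>
     (\<forall>A\<in>\<A>. infinite A \<or> 2 < card A) \<and>
     \<comment> \<open>(2)\<close>
     (\<forall>\<epsilon>>0. finite {A\<in>\<A>. diameter A > \<epsilon>}) \<and>
     \<comment> \<open>(3)\<close>
     (\<forall>x\<in>X. \<forall>y\<in>X. x \<noteq> y \<longrightarrow>
        (\<exists>\<B>. finite \<B> \<and> \<B> \<subseteq> \<A> \<and> separates_from X (\<Union>\<B>) {x} {y})) \<and>
     \<comment> \<open>(4)\<close>
     (\<forall>A\<in>\<A>. acts_as_convergence_group (Stab G act A) act A) \<and>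
     \<comment> \<open>(5)\<close>
     (\<forall>A\<in>\<A>. \<forall>B\<in>\<A>. finite (A \<inter> B) \<and> card (A \<inter> B) \<le> 2 \<longrightarrow>
        (\<forall>c. A \<inter> B = {c} \<longrightarrow> (\<forall>b\<in>B - {c}.
           \<exists>L. L \<noteq> [] \<and> set L \<subseteq> \<A> \<and> crossing_sequence X (A # L @ [B]) \<and>
               (\<forall>Ai\<in>set L. {b, c} \<inter> Ai = {}))) \<and>
        (card (A \<inter> B) \<noteq> 1 \<longrightarrow>
           (\<exists>L. L \<noteq> [] \<and> set L \<subseteq> \<A> \<and> crossing_sequence X (A # L @ [B]) \<and>
               (\<forall>Ai\<in>set L. (A \<inter> B) \<inter> Ai = {}))))"

end

theory Submission
  imports Defs
begin

text \<open>
  Let \<open>p, p'\<close> be the attractors of \<open>(f\<^sub>i)\<close> on \<open>A\<close> and \<open>B\<close>. If some point of \<open>A \<inter> B\<close> is the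
  repeller of neither action, its orbit converges to both attractors. Otherwise \<open>A \<inter> B\<close>
  consists of repellers, and axiom (5) yields a crossing chain \<open>A, A\<^sub>1, \<dots>, A\<^sub>k, B\<close> avoiding them.
  By axiom (2) and compactness, along a subsequence the images \<open>f\<^sub>i(A\<^sub>j)\<close> are either constant or
  shrink to a point. In the locally connected space \<open>X\<close>, a set that contains a point, or
  separates two points, whose orbits converge to \<open>q\<close> can only shrink to \<open>q\<close>; since crossing sets
  meet or separate each other, this propagates \<open>p'\<close> from \<open>B\<close> down the chain and forces \<open>p' = p\<close>
  at \<open>A\<close>. Constant images are excluded by choosing the chain away from the points sent to \<open>p'\<close>.
  The repellers agree because they are the attractors of the inverse sequence.
\<close>

section \<open>Convergence of sets and convergence sequences\<close>

lemma sets_converge_to_iff_eventually: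
  "sets_converge_to S p \<longleftrightarrow> (\<forall>U. open U \<longrightarrow> p \<in> U \<longrightarrow> (\<forall>\<^sub>F i in sequentially. S i \<subseteq> U))"
  unfolding sets_converge_to_def eventually_sequentially by blast

lemma sets_converge_to_LIMSEQ:
  assumes "sets_converge_to S q" "\<And>i. x i \<in> S i"
  shows "x \<longlonglongrightarrow> q"
proof (rule topological_tendstoI)
  fix U assume "open U" "q \<in> U"
  with assms(1) have "\<forall>\<^sub>F i in sequentially. S i \<subseteq> U"
    by (simp add: sets_converge_to_iff_eventually)
  then show "\<forall>\<^sub>F i in sequentially. x i \<in> U"
    by (rule eventually_mono) (use assms(2) in blast)
qed

lemma sets_converge_to_common_point:
  fixes q :: "'a::t2_space"
  assumes "sets_converge_to S q" "\<And>i. w \<in> S i"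
  shows "w = q"
  using LIMSEQ_unique[OF tendsto_const sets_converge_to_LIMSEQ[OF assms]] .

lemma sets_converge_to_subseq:
  assumes "sets_converge_to S q" "strict_mono r"
  shows "sets_converge_to (S \<circ> r) q"
  using assms unfolding sets_converge_to_iff_eventually by (auto intro: eventually_subseq)

lemma sets_converge_to_of_diameter:
  fixes T :: "nat \<Rightarrow> 'a::metric_space set"
  assumes "x \<longlonglongrightarrow> q" "\<And>i. x i \<in> T i" "\<And>i. bounded (T i)"
    and small: "\<And>\<epsilon>. \<epsilon> > 0 \<Longrightarrow> \<forall>\<^sub>F i in sequentially. diameter (T i) \<le> \<epsilon>"
  shows "sets_converge_to T q"
  unfolding sets_converge_to_iff_eventually
proof (intro allI impI)
  fix U assume "open U" "q \<in> U"
  then obtain e where "e > 0" "ball q e \<subseteq> U"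
    by (meson openE)
  have "\<forall>\<^sub>F i in sequentially. dist (x i) q < e / 2"
    using \<open>x \<longlonglongrightarrow> q\<close> by (rule tendstoD) (simp add: \<open>e > 0\<close>)
  moreover have "\<forall>\<^sub>F i in sequentially. diameter (T i) \<le> e / 2"
    using \<open>e > 0\<close> by (intro small) simp
  ultimately show "\<forall>\<^sub>F i in sequentially. T i \<subseteq> U"
  proof eventually_elim
    case (elim i)
    have "z \<in> ball q e" if "z \<in> T i" for z
    proof -
      have "dist (x i) z \<le> e / 2"
        using diameter_bounded_bound[OF assms(3) assms(2) that] elim(2) by linarith
      moreover have "dist q (x i) < e / 2"
        using elim(1) by (simp add: dist_commute)
      ultimately show ?thesis
        using dist_triangle[of q z "x i"] by simp
    qed
    with \<open>ball q e \<subseteq> U\<close> show ?case by blast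
  qed
qed

lemma convergence_sequence_on_subseq:
  assumes "convergence_sequence_on D F n p" "strict_mono r"
  shows "convergence_sequence_on D (F \<circ> r) n p"
  using assms sets_converge_to_subseq[OF _ assms(2)]
  unfolding convergence_sequence_on_def comp_def by blast

lemma convergence_sequence_on_LIMSEQ:
  assumes "convergence_sequence_on D F n p" "x \<in> D" "x \<noteq> n"
  shows "(\<lambda>i. F i x) \<longlonglongrightarrow> p"
proof -
  have "compact {x}" "{x} \<subseteq> D - {n}"
    using assms(2,3) by auto
  with assms(1) have "sets_converge_to (\<lambda>i. F i ` {x}) p"
    unfolding convergence_sequence_on_def by blast
  then show ?thesis
    by (rule sets_converge_to_LIMSEQ) simp
qed

lemma convergence_sequence_on_fixed_point:
  fixes D :: "'a::t2_space set"
  assumes "convergence_sequence_on D F n p" "x \<in> D" "x \<noteq> n" "\<And>i. F i x = x"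
  shows "x = p"
  using convergence_sequence_on_LIMSEQ[OF assms(1-3)] assms(4) LIMSEQ_const_iff by auto

lemma convergence_sequence_on_inverse:
  fixes D :: "'a::t2_space set"
  assumes conv: "convergence_sequence_on D F n p" and "compact D"
    and inv_into: "\<And>i. Finv i ` D \<subseteq> D" and inverse: "\<And>i x. x \<in> D \<Longrightarrow> F i (Finv i x) = x"
  shows "convergence_sequence_on D Finv p n"
  unfolding convergence_sequence_on_def sets_converge_to_iff_eventually
proof (intro conjI allI impI)
  show "p \<in> D" "n \<in> D"
    using conv unfolding convergence_sequence_on_def by auto
  fix C U assume C: "compact C \<and> C \<subseteq> D - {p}" and U: "open U" "n \<in> U"
  have "compact (D - U)" "D - U \<subseteq> D - {n}"
    using \<open>compact D\<close> U by (auto intro: compact_diff)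
  with conv have "sets_converge_to (\<lambda>i. F i ` (D - U)) p"
    unfolding convergence_sequence_on_def by blast
  moreover have "open (- C)" "p \<in> - C"
    using C compact_imp_closed by auto
  ultimately have "\<forall>\<^sub>F i in sequentially. F i ` (D - U) \<subseteq> - C"
    unfolding sets_converge_to_iff_eventually by blast
  then show "\<forall>\<^sub>F i in sequentially. Finv i ` C \<subseteq> U"
  proof (rule eventually_mono, safe)
    fix i x assume sub: "F i ` (D - U) \<subseteq> - C" and "x \<in> C"
    then have "x \<in> D"
      using C by blast
    show "Finv i x \<in> U"
    proof (rule ccontr)
      assume "Finv i x \<notin> U"
      then have "F i (Finv i x) \<in> - C"
        using sub inv_into \<open>x \<in> D\<close> by blast
      with inverse[OF \<open>x \<in> D\<close>] \<open>x \<in> C\<close> show False by simp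
    qed
  qed
qed

lemma obtain_three_distinct:
  assumes "infinite D \<or> 2 < card D"
  obtains a b c where "a \<in> D" "b \<in> D" "c \<in> D" "a \<noteq> b" "a \<noteq> c" "b \<noteq> c"
proof -
  obtain T where "T \<subseteq> D" "card T = 3"
    using assms obtain_subset_with_card_n[of 3 D] infinite_arbitrarily_large[of D 3]
    by (metis Suc_leI numeral_3_eq_3 numeral_2_eq_2)
  then show ?thesis
    using that card_3_iff[of T] by auto
qed

text \<open>
  If the repeller were isolated, the images of the compact set of all other points would
  cover all of \<open>D\<close> but one point and shrink to the attractor, which is absurd once \<open>D\<close> has
  three points.
\<close>

lemma convergence_sequence_on_repeller_islimpt:
  fixes D :: "'a::metric_space set"
  assumes conv: "convergence_sequence_on D F n p" and "compact D"
    and surj: "\<And>i. F i ` D = D" and "infinite D \<or> 2 < card D"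
  shows "n islimpt D"
proof (rule ccontr)
  assume "\<not> n islimpt D"
  then obtain U where U: "open U" "n \<in> U" "D \<inter> U \<subseteq> {n}"
    unfolding islimpt_def by blast
  have "compact (D - U)" "D - U \<subseteq> D - {n}"
    using \<open>compact D\<close> U by (auto intro: compact_diff)
  with conv have shrink: "sets_converge_to (\<lambda>i. F i ` (D - U)) p"
    unfolding convergence_sequence_on_def by blast
  have cover: "D - {F i n} \<subseteq> F i ` (D - U)" for i
    using surj[of i] U(3) by blast
  obtain a b c where abc: "a \<in> D" "b \<in> D" "c \<in> D" "a \<noteq> b" "a \<noteq> c" "b \<noteq> c"
    using assms(4) by (rule obtain_three_distinct)
  define \<epsilon> where "\<epsilon> = min (dist a b) (min (dist a c) (dist b c)) / 2"
  have "\<epsilon> > 0"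
    unfolding \<epsilon>_def using abc by simp
  with shrink obtain i where i: "F i ` (D - U) \<subseteq> ball p \<epsilon>"
    unfolding sets_converge_to_def by (meson open_ball centre_in_ball order_refl)
  have close: "dist x y < 2 * \<epsilon>" if "x \<in> D - {F i n}" "y \<in> D - {F i n}" for x y
  proof -
    have "x \<in> ball p \<epsilon>" "y \<in> ball p \<epsilon>"
      using that cover[of i] i by blast+
    then show ?thesis
      using dist_triangle_less_add[of x p \<epsilon> y \<epsilon>] by (simp add: dist_commute)
  qed
  have "2 * \<epsilon> \<le> dist a b" "2 * \<epsilon> \<le> dist a c" "2 * \<epsilon> \<le> dist b c"
    unfolding \<epsilon>_def by auto
  then show False
    using close[of a b] close[of a c] close[of b c] abc by fastforce
qed

section \<open>Separation in locally connected spaces\<close>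

lemma separating_sets_meet_neighbourhoods:
  assumes "locally connected X" "p \<in> X"
    and "u \<longlonglongrightarrow> p" "v \<longlonglongrightarrow> p" "\<And>i. u i \<in> X" "\<And>i. v i \<in> X"
    and sep: "\<And>i. \<not> connected_component (X - S i) (u i) (v i)"
    and "open U" "p \<in> U"
  shows "\<not> (\<forall>\<^sub>F i in sequentially. S i \<inter> U = {})"
proof
  assume avoid: "\<forall>\<^sub>F i in sequentially. S i \<inter> U = {}"
  have "openin (top_of_set X) (X \<inter> U)"
    using \<open>open U\<close> by (simp add: openin_open_Int)
  then obtain W where W: "openin (top_of_set X) W" "connected W" "p \<in> W" "W \<subseteq> X \<inter> U"
    using assms(1,2,9) unfolding locally_connected by (metis IntI)
  then obtain V where V: "open V" "W = X \<inter> V"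
    using openin_open by metis
  have "\<forall>\<^sub>F i in sequentially. u i \<in> V \<and> v i \<in> V \<and> S i \<inter> U = {}"
    using topological_tendstoD[OF assms(3) V(1)] topological_tendstoD[OF assms(4) V(1)] avoid W(3) V(2)
    by (auto intro: eventually_conj)
  then obtain i where "u i \<in> V" "v i \<in> V" "S i \<inter> U = {}"
    using eventually_happens' sequentially_bot by blast
  moreover have "W \<subseteq> X - S i"
    using W(4) \<open>S i \<inter> U = {}\<close> by blast
  ultimately have "connected_component (X - S i) (u i) (v i)"
    unfolding connected_component_def using W(2) V(2) assms(5,6) by blast
  with sep show False by blast
qed

lemma separating_sets_converge_to_limit:
  fixes q :: "'a::t2_space"
  assumes "locally connected X" "p \<in> X"
    and "u \<longlonglongrightarrow> p" "v \<longlonglongrightarrow> p" "\<And>i. u i \<in> X" "\<And>i. v i \<in> X"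
    and "\<And>i. \<not> connected_component (X - S i) (u i) (v i)"
    and "sets_converge_to S q"
  shows "q = p"
proof (rule ccontr)
  assume "q \<noteq> p"
  then obtain U V where "open U" "open V" "p \<in> U" "q \<in> V" and disj: "U \<inter> V = {}"
    using hausdorff by metis
  from assms(8) \<open>open V\<close> \<open>q \<in> V\<close> have "\<forall>\<^sub>F i in sequentially. S i \<subseteq> V"
    unfolding sets_converge_to_iff_eventually by blast
  then have "\<forall>\<^sub>F i in sequentially. S i \<inter> U = {}"
    by (rule eventually_mono) (use disj in blast)
  with separating_sets_meet_neighbourhoods[OF assms(1-7) \<open>open U\<close> \<open>p \<in> U\<close>] show False ..
qed

lemma separating_closed_set_contains_limit:
  assumes "locally connected X" "p \<in> X"
    and "u \<longlonglongrightarrow> p" "v \<longlonglongrightarrow> p" "\<And>i. u i \<in> X" "\<And>i. v i \<in> X"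
    and "\<And>i. \<not> connected_component (X - E) (u i) (v i)" "closed E"
  shows "p \<in> E"
proof (rule ccontr)
  assume "p \<notin> E"
  with separating_sets_meet_neighbourhoods[OF assms(1-6), of "\<lambda>i. E" "- E"] assms(7,8)
  show False by auto
qed

lemma homeomorphism_not_connected_component_image:
  assumes hom: "homeomorphism X X F Finv" and "C \<subseteq> X" "u \<in> X - C" "v \<in> X - C"
    and "\<not> connected_component (X - C) u v"
  shows "\<not> connected_component (X - F ` C) (F u) (F v)"
proof -
  have "inj_on F X"
    by (meson hom homeomorphism_apply1 inj_on_inverseI)
  then have "F ` (X - C) = F ` X - F ` C"
    using \<open>C \<subseteq> X\<close> by (simp add: inj_on_image_set_diff)
  then have "F ` (X - C) = X - F ` C"
    using homeomorphism_image1[OF hom] by simp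
  then have "homeomorphism (X - C) (X - F ` C) F Finv"
    by (rule homeomorphism_of_subsets[OF hom, rotated 2]) auto
  with assms(3-5) show ?thesis
    using connected_component_homeomorphism_iff by blast
qed

lemma islimpt_obtain_separated_point:
  assumes "locally connected X" "closed C" "D \<subseteq> X" "n islimpt D" "n \<in> X - C"
    and "\<not> connected_component (X - C) n w"
  obtains e where "e \<in> D - C" "e \<noteq> n" "\<not> connected_component (X - C) e w"
proof -
  have "openin (top_of_set X) (X - C)"
    using \<open>closed C\<close> by (metis Diff_eq open_Compl openin_open_Int)
  then have "openin (top_of_set X) (connected_component_set (X - C) n)"
    using openin_connected_component_locally_connected locally_open_subset[OF assms(1)] openin_trans
    by blast
  then obtain V where V: "open V" "connected_component_set (X - C) n = X \<inter> V"
    using openin_open by metis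
  have "n \<in> V"
    using V(2) connected_component_refl[OF \<open>n \<in> X - C\<close>] by blast
  with \<open>n islimpt D\<close> obtain e where e: "e \<in> D" "e \<in> V" "e \<noteq> n"
    using V(1) unfolding islimpt_def by blast
  then have ne: "connected_component (X - C) n e"
    using V(2) \<open>D \<subseteq> X\<close> by blast
  then have "\<not> connected_component (X - C) e w"
    using assms(6) connected_component_trans by blast
  moreover have "e \<in> D - C"
    using ne connected_component_in e(1) by blast
  ultimately show ?thesis
    using that e(3) by blast
qed

section \<open>Sets pinched towards a point\<close>

definition pinched_towards :: "'a::topological_space set \<Rightarrow> (nat \<Rightarrow> 'a \<Rightarrow> 'a) \<Rightarrow> 'a set \<Rightarrow> 'a \<Rightarrow> bool" where
  "pinched_towards X F C q \<longleftrightarrow>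
     (\<exists>x\<in>C. (\<lambda>i. F i x) \<longlonglongrightarrow> q) \<or>
     (\<exists>u\<in>X - C. \<exists>v\<in>X - C. \<not> connected_component (X - C) u v \<and>
        (\<lambda>i. F i u) \<longlonglongrightarrow> q \<and> (\<lambda>i. F i v) \<longlonglongrightarrow> q)"

lemma pinched_towards_imageE:
  assumes "closed X" and hom: "\<And>i. homeomorphism X X (F i) (Finv i)" and "C \<subseteq> X"
    and "pinched_towards X F C q"
  obtains x where "\<And>i. x i \<in> F i ` C" "x \<longlonglongrightarrow> q"
  | u v where "q \<in> X" "u \<longlonglongrightarrow> q" "v \<longlonglongrightarrow> q" "\<And>i. u i \<in> X" "\<And>i. v i \<in> X"
      "\<And>i. \<not> connected_component (X - F i ` C) (u i) (v i)"
proof -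
  consider x where "x \<in> C" "(\<lambda>i. F i x) \<longlonglongrightarrow> q"
    | u v where "u \<in> X - C" "v \<in> X - C" "\<not> connected_component (X - C) u v"
      "(\<lambda>i. F i u) \<longlonglongrightarrow> q" "(\<lambda>i. F i v) \<longlonglongrightarrow> q"
    using \<open>pinched_towards X F C q\<close> unfolding pinched_towards_def by blast
  then show ?thesis
  proof cases
    case 1
    then show ?thesis using that(1)[of "\<lambda>i. F i x"] by blast
  next
    case 2
    have in_X: "F i u \<in> X" "F i v \<in> X" for i
      using hom[of i] 2(1,2) unfolding homeomorphism_def by auto
    have "q \<in> X"
      using closed_sequentially[OF \<open>closed X\<close>, of "\<lambda>i. F i u"] 2(4) in_X by blast
    with 2 show ?thesis
      using that(2)[of "\<lambda>i. F i u" "\<lambda>i. F i v"] in_X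
        homeomorphism_not_connected_component_image[OF hom \<open>C \<subseteq> X\<close>] by blast
  qed
qed

lemma pinched_towards_sets_converge_to:
  fixes X :: "'a::t2_space set"
  assumes "locally connected X" "closed X" "\<And>i. homeomorphism X X (F i) (Finv i)" "C \<subseteq> X"
    and "pinched_towards X F C q" and shrink: "sets_converge_to (\<lambda>i. F i ` C) q'"
  shows "q' = q"
  using assms(2-5)
proof (cases rule: pinched_towards_imageE)
  case (1 x)
  then show ?thesis
    using LIMSEQ_unique sets_converge_to_LIMSEQ[OF shrink] by blast
next
  case (2 u v)
  then show ?thesis
    using separating_sets_converge_to_limit[OF assms(1) _ _ _ _ _ _ shrink] by blast
qed

lemma pinched_towards_constant_image:
  assumes "locally connected X" "closed X" "\<And>i. homeomorphism X X (F i) (Finv i)" "C \<subseteq> X"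
    and "pinched_towards X F C q" and const: "\<And>i. F i ` C = E" and "closed E"
  shows "q \<in> E"
  using assms(2-5)
proof (cases rule: pinched_towards_imageE)
  case (1 x)
  then show ?thesis
    using closed_sequentially[OF \<open>closed E\<close>, of x] const by blast
next
  case (2 u v)
  then show ?thesis
    using separating_closed_set_contains_limit[OF assms(1), of q u v E] const \<open>closed E\<close> by auto
qed

lemma cross_pinched_towards_of_sets_converge_to:
  assumes "cross X C C'" and shrink: "sets_converge_to (\<lambda>i. F i ` C) q"
  shows "pinched_towards X F C' q"
proof (cases "C \<inter> C' = {}")
  case False
  then obtain x where "x \<in> C" "x \<in> C'" by blast
  then show ?thesis
    unfolding pinched_towards_def using sets_converge_to_LIMSEQ[OF shrink, of "\<lambda>i. F i x"] by blast
next
  case True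
  with \<open>cross X C C'\<close> have "separates X C' C"
    unfolding cross_def by blast
  then obtain u v where "u \<in> C" "v \<in> C" "u \<in> X - C'" "v \<in> X - C'"
      "\<not> connected_component (X - C') u v"
    unfolding separates_def separates_from_def by blast
  then show ?thesis
    unfolding pinched_towards_def
    using sets_converge_to_LIMSEQ[OF shrink, of "\<lambda>i. F i u"] sets_converge_to_LIMSEQ[OF shrink, of "\<lambda>i. F i v"]
    by blast
qed

lemma cross_pinched_towards_of_convergence_sequence:
  fixes X :: "'a::metric_space set"
  assumes "locally connected X" "D \<subseteq> X" "compact D" "\<And>i. F i ` D = D"
    and conv: "convergence_sequence_on D F n p" and "infinite D \<or> 2 < card D"
    and "closed C" "n \<notin> C" "cross X C D"
  shows "pinched_towards X F C p"
proof (cases "C \<inter> D = {}")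
  case False
  then obtain x where "x \<in> C" "x \<in> D" by blast
  then show ?thesis
    unfolding pinched_towards_def
    using convergence_sequence_on_LIMSEQ[OF conv] \<open>n \<notin> C\<close> by blast
next
  case True
  with \<open>cross X C D\<close> have "separates X C D"
    unfolding cross_def by blast
  then obtain u v where uv: "u \<in> D - C" "v \<in> D - C" "\<not> connected_component (X - C) u v"
    unfolding separates_def separates_from_def by blast
  have "\<exists>u\<in>D - C. \<exists>v\<in>D - C. u \<noteq> n \<and> v \<noteq> n \<and> \<not> connected_component (X - C) u v"
  proof (cases "u \<noteq> n \<and> v \<noteq> n")
    case True
    with uv show ?thesis by blast
  next
    case False
    then obtain w where w: "w \<in> D - C" "\<not> connected_component (X - C) n w"
      using uv connected_component_sym by blast
    have "n \<in> X - C"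
      using uv False assms(2) by blast
    then have "w \<noteq> n"
      using w(2) connected_component_refl[OF \<open>n \<in> X - C\<close>] by blast
    have "n islimpt D"
      using convergence_sequence_on_repeller_islimpt[OF conv assms(3,4,6)] .
    then obtain e where "e \<in> D - C" "e \<noteq> n" "\<not> connected_component (X - C) e w"
      using islimpt_obtain_separated_point[OF assms(1,7,2) _ \<open>n \<in> X - C\<close> w(2)] by blast
    with w(1) \<open>w \<noteq> n\<close> show ?thesis by blast
  qed
  then show ?thesis
    unfolding pinched_towards_def using convergence_sequence_on_LIMSEQ[OF conv] assms(2) by blast
qed

lemma obtain_constant_preimage_of_attractor:
  fixes B :: "'a::t2_space set"
  assumes conv: "convergence_sequence_on B F n p" and "compact B" and surj: "\<And>i. F i ` B = B"
    and inj: "\<And>i. inj_on (F i) (C \<union> B)" and "closed C" "n \<notin> C"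
    and const: "\<And>i. F i ` C = E" and "p \<in> E"
  obtains y where "y \<in> C \<inter> B" "\<And>i. F i y = p"
proof -
  have image: "F i ` (C \<inter> B) = E \<inter> B" for i
    using inj_on_image_Int[OF inj[of i], of C B] const surj by simp
  have "compact (C \<inter> B)" "C \<inter> B \<subseteq> B - {n}"
    using \<open>compact B\<close> \<open>closed C\<close> \<open>n \<notin> C\<close> by (auto simp: Int_commute compact_Int_closed)
  with conv have "sets_converge_to (\<lambda>i. F i ` (C \<inter> B)) p"
    unfolding convergence_sequence_on_def by blast
  then have only_p: "E \<inter> B \<subseteq> {p}"
    using sets_converge_to_common_point image by blast
  have "p \<in> B"
    using conv unfolding convergence_sequence_on_def by blast
  then obtain y where "y \<in> C \<inter> B" "F 0 y = p"
    using image[of 0] \<open>p \<in> E\<close> by (metis IntI imageE)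
  moreover have "F i y = p" for i
    using image[of i] only_p \<open>y \<in> C \<inter> B\<close> by blast
  ultimately show ?thesis
    using that by blast
qed

section \<open>Sequences of sets with few large members\<close>

definition constant_or_shrinking :: "(nat \<Rightarrow> 'a::topological_space set) \<Rightarrow> bool" where
  "constant_or_shrinking T \<longleftrightarrow> (\<exists>E. \<forall>i. T i = E) \<or> (\<exists>q. sets_converge_to T q)"

lemma constant_or_shrinking_subseq:
  assumes "constant_or_shrinking T" "strict_mono r"
  shows "constant_or_shrinking (T \<circ> r)"
  using assms sets_converge_to_subseq unfolding constant_or_shrinking_def by fastforce

lemma ex_subseq_sets_converge_to:
  fixes X :: "'a::metric_space set" and T :: "nat \<Rightarrow> 'a set"
  assumes "compact X" "\<And>i. T i \<subseteq> X" "\<And>i. T i \<noteq> {}"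
    and small: "\<And>\<epsilon>. \<epsilon> > 0 \<Longrightarrow> \<forall>\<^sub>F i in sequentially. diameter (T i) \<le> \<epsilon>"
  obtains r q where "strict_mono r" "sets_converge_to (T \<circ> r) q"
proof -
  from assms(3) have "\<forall>i. \<exists>y. y \<in> T i"
    by blast
  then obtain x where x: "\<And>i. x i \<in> T i"
    by metis
  then have "\<forall>i. x i \<in> X"
    using assms(2) by blast
  then obtain q r where "q \<in> X" "strict_mono r" "(x \<circ> r) \<longlonglongrightarrow> q"
    by (rule seq_compactE[OF compact_imp_seq_compact[OF \<open>compact X\<close>]])
  moreover have "bounded (T i)" for i
    using bounded_subset[OF compact_imp_bounded[OF assms(1)] assms(2)] .
  ultimately have "sets_converge_to (T \<circ> r) q"
    using x small by (intro sets_converge_to_of_diameter[of "x \<circ> r"]) (auto intro: eventually_subseq)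
  with \<open>strict_mono r\<close> show ?thesis
    using that by blast
qed

text \<open>
  If no member of \<open>\<A>\<close> occurs infinitely often in \<open>T\<close>, then, as only finitely many members are
  large, the diameters of the \<open>T i\<close> tend to zero.
\<close>

lemma ex_subseq_constant_or_shrinking:
  fixes X :: "'a::metric_space set" and T :: "nat \<Rightarrow> 'a set"
  assumes "compact X" "\<And>A. A \<in> \<A> \<Longrightarrow> A \<subseteq> X"
    and finite_large: "\<And>\<epsilon>. \<epsilon> > 0 \<Longrightarrow> finite {A\<in>\<A>. diameter A > \<epsilon>}"
    and "\<And>i. T i \<in> \<A>" "\<And>i. T i \<noteq> {}"
  obtains r where "strict_mono r" "constant_or_shrinking (T \<circ> r)"
proof (cases "\<exists>E. infinite {i. T i = E}")
  case True
  then obtain E where "infinite {i. T i = E}" by blast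
  then have "strict_mono (enumerate {i. T i = E})" "\<And>i. T (enumerate {i. T i = E} i) = E"
    using strict_mono_enumerate enumerate_in_set by blast+
  then show ?thesis
    using that unfolding constant_or_shrinking_def by (metis comp_apply)
next
  case False
  have "\<forall>\<^sub>F i in sequentially. diameter (T i) \<le> \<epsilon>" if "\<epsilon> > 0" for \<epsilon>
  proof -
    have "{i. diameter (T i) > \<epsilon>} \<subseteq> (\<Union>E\<in>{A\<in>\<A>. diameter A > \<epsilon>}. {i. T i = E})"
      using assms(4) by blast
    moreover have "finite (\<Union>E\<in>{A\<in>\<A>. diameter A > \<epsilon>}. {i. T i = E})"
      using finite_large[OF that] False by blast
    ultimately have "finite {i. diameter (T i) > \<epsilon>}"
      by (rule finite_subset)
    then show ?thesis
      unfolding cofinite_eq_sequentially[symmetric] eventually_cofinite by (simp add: not_le)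
  qed
  then obtain r q where "strict_mono r" "sets_converge_to (T \<circ> r) q"
    using ex_subseq_sets_converge_to[OF \<open>compact X\<close>] assms(2,4,5) by metis
  then show ?thesis
    using that unfolding constant_or_shrinking_def by blast
qed

lemma ex_subseq_all_constant_or_shrinking:
  fixes X :: "'a::metric_space set" and T :: "'b \<Rightarrow> nat \<Rightarrow> 'a set"
  assumes "compact X" "\<And>A. A \<in> \<A> \<Longrightarrow> A \<subseteq> X"
    and "\<And>\<epsilon>. \<epsilon> > 0 \<Longrightarrow> finite {A\<in>\<A>. diameter A > \<epsilon>}"
    and "finite \<C>" "\<And>C i. C \<in> \<C> \<Longrightarrow> T C i \<in> \<A>" "\<And>C i. C \<in> \<C> \<Longrightarrow> T C i \<noteq> {}"
  obtains r where "strict_mono r" "\<And>C. C \<in> \<C> \<Longrightarrow> constant_or_shrinking (T C \<circ> r)"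
proof -
  from \<open>finite \<C>\<close> assms(5,6)
  have "\<exists>r. strict_mono r \<and> (\<forall>C\<in>\<C>. constant_or_shrinking (T C \<circ> r))"
  proof (induction rule: finite_induct)
    case empty
    show ?case using strict_mono_id by blast
  next
    case (insert C \<C>)
    then obtain r where r: "strict_mono r" "\<forall>C\<in>\<C>. constant_or_shrinking (T C \<circ> r)"
      by blast
    obtain s where s: "strict_mono s" "constant_or_shrinking (T C \<circ> r \<circ> s)"
      using ex_subseq_constant_or_shrinking[OF assms(1-3), of "T C \<circ> r"] insert.prems by auto
    have "\<forall>C\<in>\<C>. constant_or_shrinking (T C \<circ> r \<circ> s)"
      using r(2) constant_or_shrinking_subseq[OF _ s(1)] by blast
    with s(2) have "\<forall>C'\<in>insert C \<C>. constant_or_shrinking (T C' \<circ> (r \<circ> s))"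
      by (simp add: comp_assoc)
    moreover have "strict_mono (r \<circ> s)"
      using r(1) s(1) by (rule strict_mono_o)
    ultimately show ?case by blast
  qed
  with that show ?thesis by blast
qed

lemma cross_commute: "cross X A B \<longleftrightarrow> cross X B A"
  unfolding cross_def by blast

lemma crossing_sequence_Cons_Cons:
  "crossing_sequence X (A # B # L) \<longleftrightarrow> cross X A B \<and> crossing_sequence X (B # L)"
  unfolding crossing_sequence_def by (simp add: All_less_Suc2)

lemma crossing_sequence_iff_successively:
  "crossing_sequence X L \<longleftrightarrow> successively (cross X) L"
proof (induction "cross X" L rule: successively.induct)
  case (3 A B L)
  then show ?case by (simp add: crossing_sequence_Cons_Cons)
qed (simp_all add: crossing_sequence_def)

lemma successively_backward_induct:
  assumes "successively R xs" "xs \<noteq> []" "P (last xs)"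
    and "\<And>x y. x \<in> set xs \<Longrightarrow> R x y \<Longrightarrow> P y \<Longrightarrow> P x"
  shows "P (hd xs)"
  using assms by (induction R xs rule: successively.induct) auto

lemma acts_as_convergence_sequence_carrier:
  "acts_as_convergence_sequence G act A f n p \<Longrightarrow> f i \<in> carrier G"
  unfolding acts_as_convergence_sequence_def Stab_def by blast

lemma acts_as_convergence_sequence_image:
  "acts_as_convergence_sequence G act A f n p \<Longrightarrow> act (f i) ` A = A"
  unfolding acts_as_convergence_sequence_def Stab_def by blast

lemma acts_as_convergence_sequence_on:
  "acts_as_convergence_sequence G act A f n p \<Longrightarrow> convergence_sequence_on A (\<lambda>i. act (f i)) n p"
  unfolding acts_as_convergence_sequence_def by blast

lemma acts_as_convergence_sequence_subseq:
  assumes "acts_as_convergence_sequence G act A f n p" "strict_mono r"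
  shows "acts_as_convergence_sequence G act A (f \<circ> r) n p"
  using assms convergence_sequence_on_subseq[of A "\<lambda>i. act (f i)" n p r]
  unfolding acts_as_convergence_sequence_def by (simp add: comp_def)

section \<open>Local convergence pairings\<close>

locale convergence_pairing =
  fixes X :: "'a::metric_space set" and G :: "('g, 'm) monoid_scheme"
    and act :: "'g \<Rightarrow> 'a \<Rightarrow> 'a" and \<A> :: "'a set set"
  assumes pairing: "local_convergence_pairing X G act \<A>"
begin

lemma
  shows compact_X: "compact X"
    and locally_connected_X: "locally connected X"
    and group_G: "group G"
    and homeomorphism_act: "g \<in> carrier G \<Longrightarrow> homeomorphism X X (act g) (act (inv\<^bsub>G\<^esub> g))"
    and member_closed: "C \<in> \<A> \<Longrightarrow> closed C"
    and member_subset: "C \<in> \<A> \<Longrightarrow> C \<subseteq> X"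
    and image_member: "g \<in> carrier G \<Longrightarrow> C \<in> \<A> \<Longrightarrow> act g ` C \<in> \<A>"
    and member_large: "C \<in> \<A> \<Longrightarrow> infinite C \<or> 2 < card C"
    and finite_large_members: "\<epsilon> > 0 \<Longrightarrow> finite {A\<in>\<A>. diameter A > \<epsilon>}"
  using pairing
  unfolding local_convergence_pairing_def peano_continuum_def acts_by_homeos_def by auto

lemma closed_X: "closed X"
  using compact_X by (rule compact_imp_closed)

lemma member_compact: "C \<in> \<A> \<Longrightarrow> compact C"
  by (metis compact_Int_closed compact_X member_closed member_subset inf.absorb2)

lemma member_nonempty: "C \<in> \<A> \<Longrightarrow> C \<noteq> {}"
  using member_large by fastforce

lemma inj_on_act: "g \<in> carrier G \<Longrightarrow> inj_on (act g) X"
  by (meson homeomorphism_act homeomorphism_apply1 inj_on_inverseI)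

lemma mem_of_act_mem_invariant:
  assumes "g \<in> carrier G" "J \<subseteq> X" "act g ` J = J" "y \<in> X" "act g y \<in> J"
  shows "y \<in> J"
proof -
  from assms(3,5) obtain j where "j \<in> J" "act g y = act g j"
    by (metis imageE)
  with inj_onD[OF inj_on_act[OF assms(1)]] assms(2,4) show ?thesis
    by blast
qed

lemma obtain_crossing_chain_avoiding_pair:
  assumes "A \<in> \<A>" "B \<in> \<A>" "A \<inter> B = {c}" "b \<in> B - {c}"
  obtains L where "L \<noteq> []" "set L \<subseteq> \<A>" "crossing_sequence X (A # L @ [B])"
    "\<forall>C\<in>set L. {b, c} \<inter> C = {}"
proof -
  have "finite (A \<inter> B) \<and> card (A \<inter> B) \<le> 2"
    using assms(3) by simp
  with pairing[unfolded local_convergence_pairing_def] assms that show ?thesis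
    by (elim conjE) meson
qed

lemma obtain_crossing_chain_avoiding_intersection:
  assumes "A \<in> \<A>" "B \<in> \<A>" "A \<inter> B = {x, y}" "x \<noteq> y"
  obtains L where "L \<noteq> []" "set L \<subseteq> \<A>" "crossing_sequence X (A # L @ [B])"
    "\<forall>C\<in>set L. (A \<inter> B) \<inter> C = {}"
proof -
  have "finite (A \<inter> B) \<and> card (A \<inter> B) \<le> 2" "card (A \<inter> B) \<noteq> 1"
    using assms(3,4) by simp_all
  with pairing[unfolded local_convergence_pairing_def] assms(1,2) that show ?thesis
    by (elim conjE) meson
qed

lemma homeomorphism_act_seq:
  "acts_as_convergence_sequence G act A f n p \<Longrightarrow> homeomorphism X X (act (f i)) (act (inv\<^bsub>G\<^esub> (f i)))"
  using homeomorphism_act acts_as_convergence_sequence_carrier by blast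

lemma act_image_Int:
  assumes "acts_as_convergence_sequence G act A f n p" "A \<in> \<A>"
    and "acts_as_convergence_sequence G act B f n' p'" "B \<in> \<A>"
  shows "act (f i) ` (A \<inter> B) = A \<inter> B"
  using inj_on_image_Int[OF inj_on_act[OF acts_as_convergence_sequence_carrier[OF assms(1)]]]
    member_subset assms acts_as_convergence_sequence_image by metis

lemma acts_as_convergence_sequence_inv:
  assumes seq: "acts_as_convergence_sequence G act A f n p" and "A \<in> \<A>"
  shows "acts_as_convergence_sequence G act A (\<lambda>i. inv\<^bsub>G\<^esub> (f i)) p n"
proof -
  note hom = homeomorphism_act_seq[OF seq]
  have "A \<subseteq> X"
    using member_subset[OF \<open>A \<in> \<A>\<close>] .
  have "act (inv\<^bsub>G\<^esub> (f i)) ` act (f i) ` A = A" for i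
    unfolding image_image using homeomorphism_apply1[OF hom] \<open>A \<subseteq> X\<close> by (simp add: subset_iff)
  then have image_inv: "act (inv\<^bsub>G\<^esub> (f i)) ` A = A" for i
    using acts_as_convergence_sequence_image[OF seq] by metis
  have "inv\<^bsub>G\<^esub> (f i) \<in> carrier G" for i
    using group.inv_closed[OF group_G acts_as_convergence_sequence_carrier[OF seq]] .
  moreover have "convergence_sequence_on A (\<lambda>i. act (inv\<^bsub>G\<^esub> (f i))) p n"
  proof (rule convergence_sequence_on_inverse[OF acts_as_convergence_sequence_on[OF seq]])
    show "act (f i) (act (inv\<^bsub>G\<^esub> (f i)) x) = x" if "x \<in> A" for i x
      using homeomorphism_apply2[OF hom] that \<open>A \<subseteq> X\<close> by blast
  qed (use member_compact[OF \<open>A \<in> \<A>\<close>] image_inv in auto)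
  ultimately show ?thesis
    unfolding acts_as_convergence_sequence_def Stab_def using image_inv by blast
qed

text \<open>
  Constant images are ruled out: by pinching they pass through \<open>p'\<close>, so \<open>C\<close> would contain a
  point of \<open>B\<close> that is always mapped onto \<open>p'\<close>.
\<close>

lemma pinched_member_shrinks_to_attractor:
  assumes B: "acts_as_convergence_sequence G act B f n' p'" "B \<in> \<A>"
    and C: "C \<in> \<A>" "n' \<notin> C"
    and escape: "\<And>y. y \<in> B \<inter> C \<Longrightarrow> \<forall>\<^sub>F i in sequentially. act (f i) y \<noteq> p'"
    and tame: "constant_or_shrinking (\<lambda>i. act (f i) ` C)"
    and pinched: "pinched_towards X (\<lambda>i. act (f i)) C p'"
  shows "sets_converge_to (\<lambda>i. act (f i) ` C) p'"
proof -
  note hom = homeomorphism_act_seq[OF B(1)]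
  from tame consider E where "\<And>i. act (f i) ` C = E" | q where "sets_converge_to (\<lambda>i. act (f i) ` C) q"
    unfolding constant_or_shrinking_def by blast
  then show ?thesis
  proof cases
    case (1 E)
    have "closed E"
      using 1[of 0] image_member[OF acts_as_convergence_sequence_carrier[OF B(1)] C(1)] member_closed
      by metis
    then have "p' \<in> E"
      using pinched_towards_constant_image[where F = "\<lambda>i. act (f i)" and Finv = "\<lambda>i. act (inv\<^bsub>G\<^esub> (f i))",
          OF locally_connected_X closed_X hom member_subset[OF C(1)] pinched 1]
      by blast
    moreover have "inj_on (act (f i)) (C \<union> B)" for i
      using inj_on_act[OF acts_as_convergence_sequence_carrier[OF B(1)]] member_subset C(1) B(2)
      by (meson inj_on_subset le_sup_iff)
    ultimately obtain y where y: "y \<in> C \<inter> B" "\<And>i. act (f i) y = p'"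
      using obtain_constant_preimage_of_attractor[OF acts_as_convergence_sequence_on[OF B(1)]
          member_compact[OF B(2)] acts_as_convergence_sequence_image[OF B(1)] _ member_closed[OF C(1)] C(2) 1]
      by metis
    then have "\<forall>\<^sub>F i in sequentially. act (f i) y \<noteq> p'"
      using escape by blast
    with y(2) show ?thesis
      by simp
  next
    case (2 q)
    then show ?thesis
      using pinched_towards_sets_converge_to[where F = "\<lambda>i. act (f i)" and Finv = "\<lambda>i. act (inv\<^bsub>G\<^esub> (f i))",
          OF locally_connected_X closed_X hom member_subset[OF C(1)] pinched]
      by simp
  qed
qed

lemma attractors_eq_of_tame_crossing_chain:
  assumes A: "acts_as_convergence_sequence G act A f n p" "A \<in> \<A>"
    and B: "acts_as_convergence_sequence G act B f n' p'" "B \<in> \<A>"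
    and L: "L \<noteq> []" "set L \<subseteq> \<A>" "crossing_sequence X (A # L @ [B])"
    and avoid: "\<And>C. C \<in> set L \<Longrightarrow> n \<notin> C \<and> n' \<notin> C"
    and escape: "\<And>y. y \<in> B \<inter> \<Union>(set L) \<Longrightarrow> \<forall>\<^sub>F i in sequentially. act (f i) y \<noteq> p'"
    and tame: "\<And>C. C \<in> set L \<Longrightarrow> constant_or_shrinking (\<lambda>i. act (f i) ` C)"
  shows "p' = p"
proof -
  let ?F = "\<lambda>i. act (f i)"
  have shrinks: "sets_converge_to (\<lambda>i. ?F i ` C) p'" if "C \<in> set L" "pinched_towards X ?F C p'" for C
    using pinched_member_shrinks_to_attractor[OF B _ _ _ tame[OF that(1)] that(2)] that(1) L(2) avoid escape
    by blast
  have crossings: "cross X A (hd L)" "successively (cross X) L" "cross X (last L) B"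
    using L(1,3) by (auto simp: crossing_sequence_iff_successively successively_append_iff successively_Cons)
  have "hd L \<in> set L" "last L \<in> set L"
    using L(1) by simp_all
  then have closed_ends: "closed (hd L)" "closed (last L)"
    using L(2) member_closed by blast+
  have "pinched_towards X ?F (last L) p'"
    using cross_pinched_towards_of_convergence_sequence[OF locally_connected_X member_subset[OF B(2)]
        member_compact[OF B(2)] acts_as_convergence_sequence_image[OF B(1)]
        acts_as_convergence_sequence_on[OF B(1)] member_large[OF B(2)] closed_ends(2) _ crossings(3)]
      avoid \<open>last L \<in> set L\<close> by blast
  then have "sets_converge_to (\<lambda>i. ?F i ` last L) p'"
    using shrinks \<open>last L \<in> set L\<close> by blast
  then have "sets_converge_to (\<lambda>i. ?F i ` hd L) p'"
  proof (rule successively_backward_induct[OF crossings(2) L(1), where P = "\<lambda>C. sets_converge_to (\<lambda>i. ?F i ` C) p'"])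
    fix C C' assume "C \<in> set L" "cross X C C'" "sets_converge_to (\<lambda>i. ?F i ` C') p'"
    then show "sets_converge_to (\<lambda>i. ?F i ` C) p'"
      using shrinks cross_pinched_towards_of_sets_converge_to cross_commute by metis
  qed
  moreover have "pinched_towards X ?F (hd L) p"
    using cross_pinched_towards_of_convergence_sequence[OF locally_connected_X member_subset[OF A(2)]
        member_compact[OF A(2)] acts_as_convergence_sequence_image[OF A(1)]
        acts_as_convergence_sequence_on[OF A(1)] member_large[OF A(2)] closed_ends(1)]
      avoid \<open>hd L \<in> set L\<close> crossings(1) cross_commute by blast
  ultimately show "p' = p"
    using pinched_towards_sets_converge_to[where F = ?F and Finv = "\<lambda>i. act (inv\<^bsub>G\<^esub> (f i))",
        OF locally_connected_X closed_X homeomorphism_act_seq[OF A(1)] member_subset]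
      \<open>hd L \<in> set L\<close> L(2) by blast
qed

lemma attractors_eq_of_crossing_chain:
  assumes A: "acts_as_convergence_sequence G act A f n p" "A \<in> \<A>"
    and B: "acts_as_convergence_sequence G act B f n' p'" "B \<in> \<A>"
    and L: "L \<noteq> []" "set L \<subseteq> \<A>" "crossing_sequence X (A # L @ [B])"
    and avoid: "\<And>C. C \<in> set L \<Longrightarrow> n \<notin> C \<and> n' \<notin> C"
    and escape: "\<And>y. y \<in> B \<inter> \<Union>(set L) \<Longrightarrow> \<forall>\<^sub>F i in sequentially. act (f i) y \<noteq> p'"
  shows "p' = p"
proof -
  have "act (f i) ` C \<in> \<A>" "act (f i) ` C \<noteq> {}" if "C \<in> set L" for C i
    using that L(2) image_member[OF acts_as_convergence_sequence_carrier[OF A(1)]] member_nonempty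
    by blast+
  then obtain r where r: "strict_mono r" "\<And>C. C \<in> set L \<Longrightarrow> constant_or_shrinking ((\<lambda>i. act (f i) ` C) \<circ> r)"
    using ex_subseq_all_constant_or_shrinking[OF compact_X member_subset finite_large_members,
        of "set L" "\<lambda>C i. act (f i) ` C"]
    by blast
  show ?thesis
  proof (rule attractors_eq_of_tame_crossing_chain)
    show "acts_as_convergence_sequence G act A (f \<circ> r) n p"
      using acts_as_convergence_sequence_subseq[OF A(1) r(1)] .
    show "acts_as_convergence_sequence G act B (f \<circ> r) n' p'"
      using acts_as_convergence_sequence_subseq[OF B(1) r(1)] .
    show "\<forall>\<^sub>F i in sequentially. act ((f \<circ> r) i) y \<noteq> p'" if "y \<in> B \<inter> \<Union>(set L)" for y
      using eventually_subseq[OF r(1) escape[OF that]] by simp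
    show "constant_or_shrinking (\<lambda>i. act ((f \<circ> r) i) ` C)" if "C \<in> set L" for C
      using r(2)[OF that] by (simp add: comp_def)
  qed (use A(2) B(2) L avoid in auto)
qed

lemma attractors_eq_of_crossing_chain_avoiding_preimages:
  assumes A: "acts_as_convergence_sequence G act A f n p" "A \<in> \<A>"
    and B: "acts_as_convergence_sequence G act B f n' p'" "B \<in> \<A>"
    and L: "L \<noteq> []" "set L \<subseteq> \<A>" "crossing_sequence X (A # L @ [B])"
    and avoid: "\<And>C. C \<in> set L \<Longrightarrow> n \<notin> C \<and> n' \<notin> C"
    and never: "\<And>y i. y \<in> B \<inter> \<Union>(set L) \<Longrightarrow> act (f i) y \<noteq> p'"
  shows "p' = p"
  using attractors_eq_of_crossing_chain[OF A B L avoid] never by (simp add: always_eventually)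

lemma attractors_eq_of_common_repeller_of_preimage:
  assumes A: "acts_as_convergence_sequence G act A f c p" "A \<in> \<A>"
    and B: "acts_as_convergence_sequence G act B f c p'" "B \<in> \<A>"
    and "A \<inter> B = {c}" and y: "y \<in> B" "\<And>i. act (f i) y = p'"
  shows "p' = p"
proof -
  \<comment> \<open>Choose the chain to avoid \<open>y\<close>; by injectivity no other point is ever mapped to \<open>p'\<close>.\<close>
  obtain b where "b \<in> B - {c}" "y \<in> {b, c}"
    using obtain_three_distinct[OF member_large[OF B(2)]] y(1) by (metis Diff_iff insertCI singletonD)
  then obtain L where L: "L \<noteq> []" "set L \<subseteq> \<A>" "crossing_sequence X (A # L @ [B])"
      "\<forall>C\<in>set L. {b, c} \<inter> C = {}"
    using obtain_crossing_chain_avoiding_pair[OF A(2) B(2) \<open>A \<inter> B = {c}\<close>] by blast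
  have never: "act (f i) y' \<noteq> p'" if "y' \<in> B \<inter> \<Union>(set L)" for y' i
  proof
    assume "act (f i) y' = p'"
    then have "y' = y"
      using y inj_on_act[OF acts_as_convergence_sequence_carrier[OF B(1)], of i]
        member_subset[OF B(2)] that by (auto dest: inj_onD)
    with that L(4) \<open>y \<in> {b, c}\<close> show False by blast
  qed
  show ?thesis
  proof (rule attractors_eq_of_crossing_chain_avoiding_preimages[OF A B L(1-3)])
    show "c \<notin> C \<and> c \<notin> C" if "C \<in> set L" for C
      using that L(4) by blast
  qed (rule never)
qed

lemma attractors_eq_of_common_repeller:
  assumes A: "acts_as_convergence_sequence G act A f c p" "A \<in> \<A>"
    and B: "acts_as_convergence_sequence G act B f c p'" "B \<in> \<A>"
    and "A \<inter> B = {c}"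
  shows "p' = p"
proof (cases "\<exists>y\<in>B. \<exists>\<^sub>F i in sequentially. act (f i) y = p'")
  case True
  then obtain y where "y \<in> B" "\<exists>\<^sub>F i in sequentially. act (f i) y = p'"
    by blast
  then obtain r :: "nat \<Rightarrow> nat" where "strict_mono r" "\<And>i. act (f (r i)) y = p'"
    using not_eventually_sequentiallyD[of "\<lambda>i. act (f i) y \<noteq> p'"] unfolding frequently_def by auto
  with \<open>y \<in> B\<close> show ?thesis
    using attractors_eq_of_common_repeller_of_preimage[OF
        acts_as_convergence_sequence_subseq[OF A(1) \<open>strict_mono r\<close>] A(2)
        acts_as_convergence_sequence_subseq[OF B(1) \<open>strict_mono r\<close>] B(2) \<open>A \<inter> B = {c}\<close>]
    by simp
next
  case False
  then have escape: "\<forall>\<^sub>F i in sequentially. act (f i) y \<noteq> p'" if "y \<in> B" for y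
    using that by (simp flip: not_frequently)
  obtain b where "b \<in> B - {c}"
    using obtain_three_distinct[OF member_large[OF B(2)]] by (metis Diff_iff singletonD)
  then obtain L where L: "L \<noteq> []" "set L \<subseteq> \<A>" "crossing_sequence X (A # L @ [B])"
      "\<forall>C\<in>set L. {b, c} \<inter> C = {}"
    using obtain_crossing_chain_avoiding_pair[OF A(2) B(2) \<open>A \<inter> B = {c}\<close>] by blast
  show ?thesis
  proof (rule attractors_eq_of_crossing_chain[OF A B L(1-3)])
    show "c \<notin> C \<and> c \<notin> C" if "C \<in> set L" for C
      using that L(4) by blast
    show "\<forall>\<^sub>F i in sequentially. act (f i) y \<noteq> p'" if "y \<in> B \<inter> \<Union>(set L)" for y
      using escape that by blast
  qed
qed

lemma attractor_eq_of_repeller_meets_attractor: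
  assumes A: "acts_as_convergence_sequence G act A f c p" "A \<in> \<A>"
    and B: "acts_as_convergence_sequence G act B f n' c" "B \<in> \<A>"
    and "A \<inter> B = {c}" "n' \<noteq> c"
  shows "p = c"
proof -
  have "n' \<in> B"
    using acts_as_convergence_sequence_on[OF B(1)] unfolding convergence_sequence_on_def by blast
  then obtain L where L: "L \<noteq> []" "set L \<subseteq> \<A>" "crossing_sequence X (A # L @ [B])"
      "\<forall>C\<in>set L. {n', c} \<inter> C = {}"
    using obtain_crossing_chain_avoiding_pair[OF A(2) B(2) \<open>A \<inter> B = {c}\<close>] \<open>n' \<noteq> c\<close> by blast
  have fixed: "act (f i) ` {c} = {c}" for i
    using act_image_Int[OF A B] \<open>A \<inter> B = {c}\<close> by simp
  have "{c} \<subseteq> X" "B \<subseteq> X"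
    using member_subset A(2) B(2) \<open>A \<inter> B = {c}\<close> by blast+
  have never: "act (f i) y \<noteq> c" if "y \<in> B \<inter> \<Union>(set L)" for y i
  proof
    assume "act (f i) y = c"
    then have "y \<in> {c}"
      using mem_of_act_mem_invariant[OF acts_as_convergence_sequence_carrier[OF A(1)] \<open>{c} \<subseteq> X\<close> fixed]
        that \<open>B \<subseteq> X\<close> by blast
    with that L(4) show False by blast
  qed
  have "c = p"
  proof (rule attractors_eq_of_crossing_chain_avoiding_preimages[OF A B L(1-3)])
    show "c \<notin> C \<and> n' \<notin> C" if "C \<in> set L" for C
      using that L(4) by blast
  qed (rule never)
  then show ?thesis ..
qed

lemma attractors_eq_of_Int_eq_repellers:
  assumes A: "acts_as_convergence_sequence G act A f n p" "A \<in> \<A>"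
    and B: "acts_as_convergence_sequence G act B f n' p'" "B \<in> \<A>"
    and "A \<inter> B = {n, n'}" "n \<noteq> n'"
  shows "p' = p"
proof -
  obtain L where L: "L \<noteq> []" "set L \<subseteq> \<A>" "crossing_sequence X (A # L @ [B])"
      "\<forall>C\<in>set L. (A \<inter> B) \<inter> C = {}"
    using obtain_crossing_chain_avoiding_intersection[OF A(2) B(2) assms(5,6)] .
  have invariant: "act (f i) ` (A \<inter> B) = A \<inter> B" for i
    using act_image_Int[OF A B] .
  have "(\<lambda>i. act (f i) n) \<longlonglongrightarrow> p'"
    using convergence_sequence_on_LIMSEQ[OF acts_as_convergence_sequence_on[OF B(1)]] assms(5,6) by blast
  moreover have "act (f i) n \<in> A \<inter> B" for i
    using invariant assms(5) by blast
  ultimately have "p' \<in> A \<inter> B"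
    using closed_sequentially[of "A \<inter> B"] assms(5) by (metis finite.emptyI finite_imp_closed finite_insert)
  have "A \<inter> B \<subseteq> X" "B \<subseteq> X"
    using member_subset A(2) B(2) by blast+
  have never: "act (f i) y \<noteq> p'" if "y \<in> B \<inter> \<Union>(set L)" for y i
  proof
    assume "act (f i) y = p'"
    then have "y \<in> A \<inter> B"
      using mem_of_act_mem_invariant[OF acts_as_convergence_sequence_carrier[OF A(1)] \<open>A \<inter> B \<subseteq> X\<close> invariant]
        \<open>p' \<in> A \<inter> B\<close> that \<open>B \<subseteq> X\<close> by blast
    with that L(4) show False by blast
  qed
  show ?thesis
  proof (rule attractors_eq_of_crossing_chain_avoiding_preimages[OF A B L(1-3)])
    show "n \<notin> C \<and> n' \<notin> C" if "C \<in> set L" for C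
      using that L(4) assms(5) by blast
  qed (rule never)
qed

lemma attractors_eq_of_Int_eq_first_repeller:
  assumes A: "acts_as_convergence_sequence G act A f n p" "A \<in> \<A>"
    and B: "acts_as_convergence_sequence G act B f n' p'" "B \<in> \<A>"
    and "A \<inter> B = {n}"
  shows "p' = p"
proof (cases "n' = n")
  case True
  with attractors_eq_of_common_repeller assms show ?thesis by blast
next
  case False
  have "act (f i) n = n" for i
    using act_image_Int[OF A B] \<open>A \<inter> B = {n}\<close> by (metis image_empty image_insert singleton_inject)
  then have "n = p'"
    using convergence_sequence_on_fixed_point[OF acts_as_convergence_sequence_on[OF B(1)]]
      \<open>A \<inter> B = {n}\<close> False by blast
  moreover have "p = n"
    using attractor_eq_of_repeller_meets_attractor[OF A] B \<open>A \<inter> B = {n}\<close> False \<open>n = p'\<close> by blast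
  ultimately show ?thesis by simp
qed

lemma attractors_eq:
  assumes A: "acts_as_convergence_sequence G act A f n p" "A \<in> \<A>"
    and B: "acts_as_convergence_sequence G act B f n' p'" "B \<in> \<A>"
    and "A \<inter> B \<noteq> {}"
  shows "p' = p"
proof (cases "\<exists>z\<in>A \<inter> B. z \<noteq> n \<and> z \<noteq> n'")
  case True
  then obtain z where "z \<in> A \<inter> B" "z \<noteq> n" "z \<noteq> n'" by blast
  then have "(\<lambda>i. act (f i) z) \<longlonglongrightarrow> p" "(\<lambda>i. act (f i) z) \<longlonglongrightarrow> p'"
    using convergence_sequence_on_LIMSEQ acts_as_convergence_sequence_on A(1) B(1) by blast+
  then show ?thesis
    using LIMSEQ_unique by blast
next
  case False
  then have "A \<inter> B \<subseteq> {n, n'}"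
    by blast
  with \<open>A \<inter> B \<noteq> {}\<close> consider "A \<inter> B = {n, n'}" "n \<noteq> n'" | "A \<inter> B = {n}" | "A \<inter> B = {n'}"
    by (cases "n \<in> A \<inter> B"; cases "n' \<in> A \<inter> B") auto
  then show ?thesis
  proof cases
    case 1
    with attractors_eq_of_Int_eq_repellers[OF A B] show ?thesis by blast
  next
    case 2
    with attractors_eq_of_Int_eq_first_repeller[OF A B] show ?thesis by blast
  next
    case 3
    with attractors_eq_of_Int_eq_first_repeller[OF B A] show ?thesis by (simp add: Int_commute)
  qed
qed

end

theorem theorem4p7:
  fixes X :: "'a::metric_space set" and G :: "('g, 'm) monoid_scheme"
    and act :: "'g \<Rightarrow> 'a \<Rightarrow> 'a" and \<A> :: "'a set set"
    and A B :: "'a set" and f :: "nat \<Rightarrow> 'g" and n p :: 'a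
  assumes "local_convergence_pairing X G act \<A>"
    and "A \<in> \<A>" and "B \<in> \<A>" and "A \<inter> B \<noteq> {}"
    and "acts_as_convergence_sequence G act A f n p"
    and "\<exists>n' p'. acts_as_convergence_sequence G act B f n' p'"
  shows "acts_as_convergence_sequence G act B f n p"
proof -
  interpret convergence_pairing X G act \<A>
    using assms(1) by unfold_locales
  obtain n' p' where B: "acts_as_convergence_sequence G act B f n' p'"
    using assms(6) by blast
  have "p' = p"
    using attractors_eq[OF assms(5,2) B assms(3,4)] .
  moreover have "n' = n"
    using attractors_eq[OF acts_as_convergence_sequence_inv[OF assms(5,2)] assms(2)
        acts_as_convergence_sequence_inv[OF B assms(3)] assms(3,4)] .
  ultimately show ?thesis
    using B by simp
qed

end
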